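(* Let $\phi:\mathbb{M}_n\to\mathbb{M}_m$ be a positive linear map with Hilbert–Schmidt adjoint $\phi^*$, and let $X\in\mathbb{M}_m^+$. Then: (1) $\ker(R_X)\subseteq\ker(\phi^* )$ if and only if $\ker(X)\subseteq\ker(\phi(\mathbf{1}_n))$; (2) if $\ker(R_X)\subseteq\ker(\phi^* )$, then $\ker(R_{\phi^*(X)})\subseteq\ker(\phi)$. The same two statements hold with $L_X$ and $L_{\phi^*(X)}$ in place of $R_X$ and $R_{\phi^*(X)}$.
   Context: $\mathbb{M}_k$ denotes the complex $k\times k$ matrices, $\mathbb{M}_k^+$ the positive semidefinite ones, $\mathbf{1}_n$ the identity. The adjoint $\phi^*:\mathbb{M}_m\to\mathbb{M}_n$ is with respect to $\langle A,B\rangle=\mathrm{Tr}[A^*B]$. For $X\in\mathbb{M}_k$, $R_X$ and $L_X$ are the linear operators on $\mathbb{M}_k$ given by $R_X(A)=AX$ and $L_X(A)=XA$; kernels of $R_X$, $\phi^*$, $\phi$ are kernels as linear maps on matrix spaces. A positive map sends positive semidefinite matrices to positive semidefinite matrices. *)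

theory Defs
  imports "Jordan_Normal_Form.Schur_Decomposition" "Jordan_Normal_Form.Matrix_Kernel"
begin

definition psd_mat :: "nat \<Rightarrow> complex mat \<Rightarrow> bool" where
  "psd_mat k A \<longleftrightarrow> A \<in> carrier_mat k k \<and> mat_adjoint A = A \<and>
     (\<forall>v \<in> carrier_vec k. (conjugate v \<bullet> (A *\<^sub>v v)) \<in> \<real> \<and> 0 \<le> Re (conjugate v \<bullet> (A *\<^sub>v v)))"

definition lin_map :: "nat \<Rightarrow> nat \<Rightarrow> (complex mat \<Rightarrow> complex mat) \<Rightarrow> bool" where
  "lin_map k l f \<longleftrightarrow>
     (\<forall>A \<in> carrier_mat k k. f A \<in> carrier_mat l l) \<and>
     (\<forall>A \<in> carrier_mat k k. \<forall>B \<in> carrier_mat k k. f (A + B) = f A + f B) \<and>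
     (\<forall>c. \<forall>A \<in> carrier_mat k k. f (c \<cdot>\<^sub>m A) = c \<cdot>\<^sub>m f A)"

definition positive_map :: "nat \<Rightarrow> nat \<Rightarrow> (complex mat \<Rightarrow> complex mat) \<Rightarrow> bool" where
  "positive_map k l f \<longleftrightarrow> (\<forall>A. psd_mat k A \<longrightarrow> psd_mat l (f A))"

definition mat_trace :: "complex mat \<Rightarrow> complex" where
  "mat_trace A = (\<Sum>i<dim_row A. A $$ (i, i))"

definition is_hs_adjoint :: "nat \<Rightarrow> nat \<Rightarrow> (complex mat \<Rightarrow> complex mat) \<Rightarrow> (complex mat \<Rightarrow> complex mat) \<Rightarrow> bool" where
  "is_hs_adjoint k l f g \<longleftrightarrow>
     (\<forall>A \<in> carrier_mat l l. g A \<in> carrier_mat k k) \<and>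
     (\<forall>A \<in> carrier_mat l l. \<forall>B \<in> carrier_mat k k.
        mat_trace (mat_adjoint A * f B) = mat_trace (mat_adjoint (g A) * B))"

definition map_ker :: "nat \<Rightarrow> nat \<Rightarrow> (complex mat \<Rightarrow> complex mat) \<Rightarrow> complex mat set" where
  "map_ker k l f = {A \<in> carrier_mat k k. f A = 0\<^sub>m l l}"

definition R_op :: "complex mat \<Rightarrow> complex mat \<Rightarrow> complex mat" where
  "R_op X = (\<lambda>A. A * X)"

definition L_op :: "complex mat \<Rightarrow> complex mat \<Rightarrow> complex mat" where
  "L_op X = (\<lambda>A. X * A)"

end

theory Submission
  imports Defs
begin

text \<open>
  Write \<phi>^* for the Hilbert--Schmidt adjoint and \<langle>A, B\<rangle> = tr (A^* B).
  Positivity of \<phi> ((B + c 1)^* (B + c 1)) for all scalars c shows that \<phi> commutes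
  with the adjoint and that every \<phi> B kills ker \<phi>(1).
  If A X = 0 (or X A = 0), the columns of A^* (or of A) lie in ker X; so when
  ker X \<subseteq> ker \<phi>(1) all \<langle>A, \<phi> B\<rangle> vanish, i.e. \<phi>^* A = 0. Conversely, for
  v \<in> ker X the rank-one matrix v v^* satisfies both equations, and
  \<langle>v v^*, \<phi>(1)\<rangle> = v^* \<phi>(1) v = 0 puts v into ker \<phi>(1).
  For the second statement, A \<phi>^*(X) = 0 gives tr (X \<phi>(A^* A)) = \<langle>\<phi>^*(X), A^* A\<rangle> = 0.
  Two psd matrices X, M with tr (X M) = 0 and ker X \<subseteq> ker M satisfy M = 0:
  writing M = W W^* (by repeated Schur complements), tr (X M) is the sum of the
  nonnegative numbers w^* X w over the columns w of W, so X W = 0, hence M W = 0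
  and M^2 = 0. Thus \<phi>(A^* A) = 0, and then \<phi>(A) = 0 by the same expansion as above.
\<close>

section \<open>Nonnegative quadratic polynomials\<close>

lemma real_nonneg_affine_or_quadratic_coeff_eq_0:
  fixes d r e :: real
  assumes nonneg: "\<And>t. 0 \<le> d + t * r + t\<^sup>2 * e" and "d = 0 \<or> e = 0"
  shows "r = 0"
proof (rule ccontr)
  assume r: "r \<noteq> 0"
  show False
  proof (cases "e = 0")
    case True
    have "d + (- (\<bar>d\<bar> + 1) / r) * r + (- (\<bar>d\<bar> + 1) / r)\<^sup>2 * e < 0"
      using r True by simp
    with nonneg show False by (metis not_le)
  next
    case False
    then have "d = 0" using assms(2) by blast
    define S where "S = \<bar>e\<bar> + 1"
    have S: "0 < S" "e \<le> S - 1" unfolding S_def by auto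
    define t where "t = - r / S"
    have "t * r + t\<^sup>2 * e \<le> t * r + t\<^sup>2 * (S - 1)"
      using S by (simp add: mult_left_mono)
    also have "\<dots> = - (r / S)\<^sup>2"
      using S unfolding t_def by (simp add: field_simps power2_eq_square)
    also have "\<dots> < 0" using r S by simp
    finally show False using nonneg[of t] \<open>d = 0\<close> by simp
  qed
qed

lemma complex_nonneg_affine_or_quadratic_coeff_eq_0:
  fixes d z e :: complex
  assumes nonneg: "\<And>t::real. 0 \<le> d + of_real t * z + (of_real t)\<^sup>2 * e" and "d = 0 \<or> e = 0"
  shows "z = 0"
proof -
  have im: "Im d + t * Im z + t\<^sup>2 * Im e = 0" for t
    using nonneg[of t] by (simp add: less_eq_complex_def power2_eq_square)
  have "Im z = 0" using im[of 1] im[of "-1"] by simp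
  moreover have "Re z = 0"
  proof (rule real_nonneg_affine_or_quadratic_coeff_eq_0)
    show "0 \<le> Re d + t * Re z + t\<^sup>2 * Re e" for t
      using nonneg[of t] by (simp add: less_eq_complex_def power2_eq_square)
    show "Re d = 0 \<or> Re e = 0" using assms(2) by auto
  qed
  ultimately show ?thesis by (simp add: complex_eq_iff)
qed

lemma sesquilinear_coeffs_eq_0:
  fixes a b :: complex
  assumes "\<And>c. c * a + cnj c * b = 0"
  shows "a = 0" "b = 0"
proof -
  have "a + b = 0" "\<i> * a - \<i> * b = 0" using assms[of 1] assms[of \<i>] by simp_all
  then show "a = 0" "b = 0" by (simp_all add: algebra_simps eq_neg_iff_add_eq_0[symmetric])
qed

lemma nonneg_sesquilinear_coeffs_eq_0:
  fixes a b d e :: complex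
  assumes nonneg: "\<And>c. 0 \<le> d + c * a + cnj c * b + cnj c * c * e" and de: "d = 0 \<or> e = 0"
  shows "a = 0" "b = 0"
proof -
  have "0 \<le> d + of_real t * (a + b) + (of_real t)\<^sup>2 * e" for t
    using nonneg[of "of_real t"] by (simp add: algebra_simps power2_eq_square)
  then have "a + b = 0" by (rule complex_nonneg_affine_or_quadratic_coeff_eq_0[OF _ de])
  have "0 \<le> d + of_real t * (\<i> * a - \<i> * b) + (of_real t)\<^sup>2 * e" for t
    using nonneg[of "of_real t * \<i>"] by (simp add: algebra_simps power2_eq_square)
  then have "\<i> * a - \<i> * b = 0" by (rule complex_nonneg_affine_or_quadratic_coeff_eq_0[OF _ de])
  moreover note \<open>a + b = 0\<close>
  ultimately show "a = 0" "b = 0" by (simp_all add: algebra_simps eq_neg_iff_add_eq_0[symmetric])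
qed

section \<open>Adjoints, traces and kernels\<close>

lemma dim_row_mat_adjoint [simp]: "dim_row (mat_adjoint A) = dim_col A"
  and dim_col_mat_adjoint [simp]: "dim_col (mat_adjoint A) = dim_row A"
  by (simp_all add: mat_adjoint_def)

lemma carrier_mat_adjoint [simp]: "A \<in> carrier_mat n m \<Longrightarrow> mat_adjoint A \<in> carrier_mat m n"
  by (intro carrier_matI) (simp_all add: carrier_matD)

lemma index_mat_adjoint [simp]:
  "i < dim_col A \<Longrightarrow> j < dim_row A \<Longrightarrow> mat_adjoint A $$ (i, j) = cnj (A $$ (j, i))"
  by (simp add: mat_adjoint_def mat_of_rows_def)

lemma mat_adjoint_adjoint [simp]: "mat_adjoint (mat_adjoint A) = (A :: complex mat)"
  by (rule eq_matI) simp_all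

lemma mat_adjoint_mult:
  assumes "A \<in> carrier_mat n k" "B \<in> carrier_mat k m"
  shows "mat_adjoint (A * B) = mat_adjoint B * mat_adjoint (A :: complex mat)"
  using assms by (intro eq_matI) (simp_all add: scalar_prod_def mult.commute)

lemma mat_adjoint_add:
  assumes "A \<in> carrier_mat n m" "B \<in> carrier_mat n m"
  shows "mat_adjoint (A + B) = mat_adjoint A + mat_adjoint (B :: complex mat)"
  using assms by (intro eq_matI) auto

lemma mat_adjoint_smult: "mat_adjoint (c \<cdot>\<^sub>m A) = cnj c \<cdot>\<^sub>m mat_adjoint (A :: complex mat)"
  by (intro eq_matI) auto

lemma mat_adjoint_one [simp]: "mat_adjoint (1\<^sub>m n) = (1\<^sub>m n :: complex mat)"
  by (intro eq_matI) auto

lemma mat_adjoint_zero [simp]: "mat_adjoint (0\<^sub>m n m) = (0\<^sub>m m n :: complex mat)"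
  by (intro eq_matI) auto

lemma row_mat_adjoint: "i < dim_col A \<Longrightarrow> row (mat_adjoint A) i = conjugate (col (A :: complex mat) i)"
  by (intro eq_vecI) simp_all

lemma hermitian_entry:
  assumes "A \<in> carrier_mat n n" "mat_adjoint A = A" "i < n" "j < n"
  shows "A $$ (j, i) = cnj (A $$ (i, j))"
  using assms index_mat_adjoint[of j A i] by simp

lemma scalar_prod_mat_adjoint:
  assumes "A \<in> carrier_mat n m" "u \<in> carrier_vec n" "w \<in> carrier_vec m"
  shows "conjugate u \<bullet> (A *\<^sub>v w) = conjugate (mat_adjoint A *\<^sub>v u) \<bullet> (w :: complex vec)"
proof -
  have "conjugate u \<bullet> (A *\<^sub>v w) = (\<Sum>i<n. \<Sum>j<m. cnj (u $ i) * A $$ (i, j) * w $ j)"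
    using assms by (simp add: scalar_prod_def atLeast0LessThan sum_distrib_left mult.assoc)
  also have "\<dots> = (\<Sum>j<m. \<Sum>i<n. cnj (u $ i) * A $$ (i, j) * w $ j)"
    by (rule sum.swap)
  also have "\<dots> = conjugate (mat_adjoint A *\<^sub>v u) \<bullet> w"
    using assms by (simp add: scalar_prod_def atLeast0LessThan sum_distrib_right sum_distrib_left mult_ac)
  finally show ?thesis .
qed

lemma mat_trace_mult_comm:
  assumes "A \<in> carrier_mat n m" "B \<in> carrier_mat m n"
  shows "mat_trace (A * B) = mat_trace (B * A)"
proof -
  have "mat_trace (A * B) = (\<Sum>i<n. \<Sum>j<m. A $$ (i, j) * B $$ (j, i))"
    using assms by (simp add: mat_trace_def scalar_prod_def atLeast0LessThan)
  also have "\<dots> = (\<Sum>j<m. \<Sum>i<n. B $$ (j, i) * A $$ (i, j))"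
    by (subst sum.swap) (simp add: mult.commute)
  also have "\<dots> = mat_trace (B * A)"
    using assms by (simp add: mat_trace_def scalar_prod_def atLeast0LessThan)
  finally show ?thesis .
qed

lemma mat_trace_adjoint: "A \<in> carrier_mat n n \<Longrightarrow> mat_trace (mat_adjoint A) = cnj (mat_trace A)"
  by (simp add: mat_trace_def)

lemma mat_trace_zero [simp]: "mat_trace (0\<^sub>m n n :: complex mat) = 0"
  by (simp add: mat_trace_def)

lemma mat_trace_adjoint_mult_self:
  assumes "A \<in> carrier_mat n m"
  shows "mat_trace (mat_adjoint A * A) = of_real (\<Sum>j<m. \<Sum>i<n. (cmod (A $$ (i, j)))\<^sup>2)"
proof -
  have "mat_trace (mat_adjoint A * A) = (\<Sum>j<m. \<Sum>i<n. A $$ (i, j) * cnj (A $$ (i, j)))"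
    using assms by (simp add: mat_trace_def scalar_prod_def atLeast0LessThan mult.commute)
  also have "\<dots> = of_real (\<Sum>j<m. \<Sum>i<n. (cmod (A $$ (i, j)))\<^sup>2)"
    by (simp only: of_real_sum complex_norm_square)
  finally show ?thesis .
qed

lemma mat_trace_adjoint_mult_self_eq_0:
  assumes A: "A \<in> carrier_mat n m" and tr: "mat_trace (mat_adjoint A * A) = 0"
  shows "A = 0\<^sub>m n m"
proof -
  have "(\<Sum>j<m. \<Sum>i<n. (cmod (A $$ (i, j)))\<^sup>2) = 0"
    using tr unfolding mat_trace_adjoint_mult_self[OF A] by (rule of_real_eq_0_iff[THEN iffD1])
  then have "\<forall>j<m. \<forall>i<n. (cmod (A $$ (i, j)))\<^sup>2 = 0"
    by (simp add: sum_nonneg_eq_0_iff sum_nonneg)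
  with A show ?thesis by (intro eq_matI) auto
qed

lemma mat_trace_adjoint_mult_mult:
  assumes W: "W \<in> carrier_mat n N" and M: "M \<in> carrier_mat n n"
  shows "mat_trace (mat_adjoint W * M * W) = (\<Sum>j<N. conjugate (col W j) \<bullet> (M *\<^sub>v col W j))"
proof -
  have "mat_adjoint W * M * W = mat_adjoint W * (M * W)"
    using W M by (simp add: assoc_mult_mat[of _ N n _ n _ N])
  then show ?thesis
    using W M by (simp add: mat_trace_def row_mat_adjoint col_mult2 atLeast0LessThan del: col_mult)
qed

lemma mat_trace_rank_one_mult:
  assumes v: "v \<in> carrier_vec n" and M: "M \<in> carrier_mat n n"
  defines "V \<equiv> mat_of_cols n [v]"
  shows "mat_trace (mat_adjoint (V * mat_adjoint V) * M) = conjugate v \<bullet> (M *\<^sub>v v)"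
proof -
  have V: "V \<in> carrier_mat n 1" unfolding V_def using mat_of_cols_carrier(1)[of n "[v]"] by simp
  have "mat_trace (mat_adjoint (V * mat_adjoint V) * M) = mat_trace (V * (mat_adjoint V * M))"
    using mat_adjoint_mult[OF V carrier_mat_adjoint[OF V]] assoc_mult_mat[OF V carrier_mat_adjoint[OF V] M]
    by simp
  also have "\<dots> = mat_trace (mat_adjoint V * M * V)"
    using mat_trace_mult_comm[OF V mult_carrier_mat[OF carrier_mat_adjoint[OF V] M]] by simp
  also have "\<dots> = conjugate v \<bullet> (M *\<^sub>v v)"
    using mat_trace_adjoint_mult_mult[OF V M] v by (simp add: V_def)
  finally show ?thesis .
qed

lemma mult_eq_0_iff_cols_in_kernel:
  assumes A: "A \<in> carrier_mat n m" and C: "C \<in> carrier_mat m N"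
  shows "A * C = 0\<^sub>m n N \<longleftrightarrow> (\<forall>k<N. col C k \<in> mat_kernel A)"
proof -
  have entry: "(A * C) $$ (i, k) = (A *\<^sub>v col C k) $ i" if "i < n" "k < N" for i k
    using A C that by simp
  have "col C k \<in> mat_kernel A \<longleftrightarrow> A *\<^sub>v col C k = 0\<^sub>v n" if "k < N" for k
    using A C that unfolding mat_kernel[OF A] by simp
  moreover have "A * C = 0\<^sub>m n N \<longleftrightarrow> (\<forall>k<N. A *\<^sub>v col C k = 0\<^sub>v n)"
  proof
    assume AC: "A * C = 0\<^sub>m n N"
    show "\<forall>k<N. A *\<^sub>v col C k = 0\<^sub>v n"
    proof (intro allI impI eq_vecI)
      fix k i assume k: "k < N" and "i < dim_vec (0\<^sub>v n :: 'a vec)"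
      then have i: "i < n" by simp
      show "(A *\<^sub>v col C k) $ i = 0\<^sub>v n $ i" using entry[OF i k] AC i k by simp
    qed (use A in simp)
  next
    assume "\<forall>k<N. A *\<^sub>v col C k = 0\<^sub>v n"
    then show "A * C = 0\<^sub>m n N"
      using entry A C by (intro eq_matI) auto
  qed
  ultimately show ?thesis by auto
qed

lemma mult_eq_0_of_kernel_subset:
  assumes "mat_kernel X \<subseteq> mat_kernel M" "X \<in> carrier_mat n k" "M \<in> carrier_mat l k" "C \<in> carrier_mat k N"
    and "X * C = 0\<^sub>m n N"
  shows "M * C = 0\<^sub>m l N"
  using assms mult_eq_0_iff_cols_in_kernel[of X n k C N] mult_eq_0_iff_cols_in_kernel[of M l k C N] by blast

section \<open>Positive semidefinite matrices\<close>

lemma quad_form_add_smult: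
  assumes "M \<in> carrier_mat k k" "x \<in> carrier_vec k" "y \<in> carrier_vec k"
  shows "conjugate (x + c \<cdot>\<^sub>v y) \<bullet> (M *\<^sub>v (x + c \<cdot>\<^sub>v y)) =
    conjugate x \<bullet> (M *\<^sub>v x) + c * (conjugate x \<bullet> (M *\<^sub>v y))
    + cnj c * (conjugate y \<bullet> (M *\<^sub>v x)) + cnj c * c * (conjugate y \<bullet> (M *\<^sub>v y))"
  using assms
  by (simp add: conjugate_add_vec conjugate_smult_vec mult_add_distrib_mat_vec mult_mat_vec
      add_scalar_prod_distrib[of _ k] scalar_prod_add_distrib[of _ k] algebra_simps)

lemma lincomb_mult_mat_vec:
  assumes "A \<in> carrier_mat m k" "B \<in> carrier_mat m k" "C \<in> carrier_mat m k" "D \<in> carrier_mat m k"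
    and v: "v \<in> carrier_vec k"
  shows "(A + b \<cdot>\<^sub>m B + c \<cdot>\<^sub>m C + d \<cdot>\<^sub>m D) *\<^sub>v v =
    A *\<^sub>v v + b \<cdot>\<^sub>v (B *\<^sub>v v) + c \<cdot>\<^sub>v (C *\<^sub>v v) + d \<cdot>\<^sub>v (D *\<^sub>v (v :: complex vec))"
  using assms by (intro eq_vecI) (simp_all add: scalar_prod_def sum.distrib sum_distrib_left algebra_simps)

lemma lincomb_quad_form:
  assumes "A \<in> carrier_mat k k" "B \<in> carrier_mat k k" "C \<in> carrier_mat k k" "D \<in> carrier_mat k k"
    and v: "v \<in> carrier_vec k"
  shows "conjugate v \<bullet> ((A + b \<cdot>\<^sub>m B + c \<cdot>\<^sub>m C + d \<cdot>\<^sub>m D) *\<^sub>v v) =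
    conjugate v \<bullet> (A *\<^sub>v v) + b * (conjugate v \<bullet> (B *\<^sub>v v)) + c * (conjugate v \<bullet> (C *\<^sub>v v))
    + d * (conjugate v \<bullet> (D *\<^sub>v (v :: complex vec)))"
  unfolding lincomb_mult_mat_vec[OF assms] using assms
  by (simp add: scalar_prod_add_distrib[of _ k])

lemma conjugate_unit_vec [simp]: "conjugate (unit_vec n i) = (unit_vec n i :: complex vec)"
  by (intro eq_vecI) (simp_all add: unit_vec_def)

lemma unit_vec_scalar_prod_mult_unit_vec:
  assumes "M \<in> carrier_mat k l" "a < k" "b < l"
  shows "unit_vec k a \<bullet> (M *\<^sub>v unit_vec l b) = (M $$ (a, b) :: complex)"
  using assms by simp

lemma mat_eq_0_of_quad_form_eq_0:
  assumes M: "(M :: complex mat) \<in> carrier_mat k k" and q: "\<And>v. v \<in> carrier_vec k \<Longrightarrow> conjugate v \<bullet> (M *\<^sub>v v) = 0"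
  shows "M = 0\<^sub>m k k"
proof (rule eq_matI)
  fix a b assume "a < dim_row (0\<^sub>m k k :: complex mat)" "b < dim_col (0\<^sub>m k k :: complex mat)"
  then have a: "a < k" and b: "b < k" by simp_all
  have sesq: "c * M $$ (a, b) + cnj c * M $$ (b, a) = 0" for c
    using q[of "unit_vec k a + c \<cdot>\<^sub>v unit_vec k b"] q[of "unit_vec k a"] q[of "unit_vec k b"]
    unfolding quad_form_add_smult[OF M unit_vec_carrier unit_vec_carrier]
    by (simp add: unit_vec_scalar_prod_mult_unit_vec[OF M] a b)
  then show "M $$ (a, b) = 0\<^sub>m k k $$ (a, b)"
    using sesquilinear_coeffs_eq_0(1)[OF sesq] a b by simp
qed (use M in simp_all)

text \<open>In the complex order of HOL-Library, 0 \<le> z means that z is a nonnegative real.\<close>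

lemma psd_mat_iff:
  "psd_mat k A \<longleftrightarrow> A \<in> carrier_mat k k \<and> mat_adjoint A = A \<and>
     (\<forall>v \<in> carrier_vec k. 0 \<le> conjugate v \<bullet> (A *\<^sub>v v))"
  by (auto simp: psd_mat_def less_eq_complex_def complex_is_Real_iff)

lemma psd_matD:
  assumes "psd_mat k A"
  shows "A \<in> carrier_mat k k" "mat_adjoint A = A" "v \<in> carrier_vec k \<Longrightarrow> 0 \<le> conjugate v \<bullet> (A *\<^sub>v v)"
  using assms by (auto simp: psd_mat_iff)

lemma psd_mat_gram:
  assumes W: "W \<in> carrier_mat k n"
  shows "psd_mat n (mat_adjoint W * W)"
  unfolding psd_mat_iff
proof (intro conjI ballI)
  show "mat_adjoint W * W \<in> carrier_mat n n" using mult_carrier_mat[OF carrier_mat_adjoint[OF W] W] .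
  show "mat_adjoint (mat_adjoint W * W) = mat_adjoint W * W"
    using W by (simp add: mat_adjoint_mult[of _ n k])
  fix v :: "complex vec" assume v: "v \<in> carrier_vec n"
  have "conjugate v \<bullet> (mat_adjoint W * W *\<^sub>v v) = conjugate v \<bullet> (mat_adjoint W *\<^sub>v (W *\<^sub>v v))"
    using W v by (simp add: assoc_mult_mat_vec[of _ n k])
  also have "\<dots> = conjugate (W *\<^sub>v v) \<bullet> (W *\<^sub>v v)"
    using scalar_prod_mat_adjoint[OF carrier_mat_adjoint[OF W] v, of "W *\<^sub>v v"] W v by simp
  also have "\<dots> = (W *\<^sub>v v) \<bullet>c (W *\<^sub>v v)"
    using W v by (simp add: conjugate_vec_sprod_comm[of _ k])
  finally show "0 \<le> conjugate v \<bullet> (mat_adjoint W * W *\<^sub>v v)"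
    using conjugate_square_ge_0_vec by simp
qed

lemma psd_mat_one: "psd_mat n (1\<^sub>m n)"
  using psd_mat_gram[of "1\<^sub>m n" n n] by simp

lemma psd_mat_kernel_of_quad_form_eq_0:
  assumes A: "psd_mat k A" and v: "v \<in> carrier_vec k" and q: "conjugate v \<bullet> (A *\<^sub>v v) = 0"
  shows "A *\<^sub>v v = 0\<^sub>v k"
proof -
  note A' = psd_matD[OF A]
  define w where "w = A *\<^sub>v v"
  have w: "w \<in> carrier_vec k" unfolding w_def using A'(1) v by simp
  have vw: "conjugate v \<bullet> (A *\<^sub>v w) = conjugate w \<bullet> w"
    using scalar_prod_mat_adjoint[OF A'(1) v w] A'(2) unfolding w_def by simp
  have wv: "conjugate w \<bullet> (A *\<^sub>v v) = conjugate w \<bullet> w"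
    unfolding w_def ..
  have "0 \<le> 0 + of_real t * (2 * (conjugate w \<bullet> w)) + (of_real t)\<^sup>2 * (conjugate w \<bullet> (A *\<^sub>v w))" for t
    using A'(3)[of "v + of_real t \<cdot>\<^sub>v w"] v w
    unfolding quad_form_add_smult[OF A'(1) v w] q vw wv by (simp add: algebra_simps power2_eq_square)
  then have "2 * (conjugate w \<bullet> w) = 0"
    by (rule complex_nonneg_affine_or_quadratic_coeff_eq_0) simp
  then have "w \<bullet>c w = 0" using conjugate_vec_sprod_comm[OF w w] by simp
  then show ?thesis using w unfolding w_def by simp
qed

lemma psd_mat_col_eq_0_of_diag_eq_0:
  assumes A: "psd_mat k A" and j: "j < k" and "A $$ (j, j) = 0" and i: "i < k"
  shows "A $$ (i, j) = 0"
proof -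
  note A' = psd_matD[OF A]
  have "conjugate (unit_vec k j) \<bullet> (A *\<^sub>v unit_vec k j) = 0"
    using unit_vec_scalar_prod_mult_unit_vec[OF A'(1) j j] assms(3) by simp
  then have "A *\<^sub>v unit_vec k j = 0\<^sub>v k"
    using psd_mat_kernel_of_quad_form_eq_0[OF A] j by simp
  then have "unit_vec k i \<bullet> (A *\<^sub>v unit_vec k j) = 0" using i by simp
  then show ?thesis using unit_vec_scalar_prod_mult_unit_vec[OF A'(1) i j] by simp
qed

lemma psd_mat_diag_real:
  assumes "psd_mat n A" "i < n"
  shows "cnj (A $$ (i, i)) = A $$ (i, i)"
  using hermitian_entry[OF psd_matD(1,2)[OF assms(1)] assms(2) assms(2)] by simp

lemma psd_mat_diag_nonneg:
  assumes "psd_mat n A" "i < n"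
  shows "0 \<le> A $$ (i, i)"
  using psd_matD(3)[OF assms(1), of "unit_vec n i"] psd_matD(1)[OF assms(1)] assms(2)
  by (simp add: unit_vec_scalar_prod_mult_unit_vec)

lemma psd_mat_eq_0_of_diag_eq_0:
  assumes A: "psd_mat n A" and diag: "\<And>i. i < n \<Longrightarrow> A $$ (i, i) = 0"
  shows "A = 0\<^sub>m n n"
  using psd_mat_col_eq_0_of_diag_eq_0[OF A _ diag] psd_matD(1)[OF A] by (intro eq_matI) auto

text \<open>The Schur complement of the pivot X_jj, kept at full size: its row and column j vanish.\<close>

definition schur_complement :: "complex mat \<Rightarrow> nat \<Rightarrow> complex mat" where
  "schur_complement X j =
     mat (dim_row X) (dim_col X) (\<lambda>(a, b). X $$ (a, b) - X $$ (a, j) * cnj (X $$ (b, j)) / X $$ (j, j))"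

lemma dim_row_schur_complement [simp]: "dim_row (schur_complement X j) = dim_row X"
  and dim_col_schur_complement [simp]: "dim_col (schur_complement X j) = dim_col X"
  by (simp_all add: schur_complement_def)

lemma schur_complement_carrier [simp]: "X \<in> carrier_mat m m \<Longrightarrow> schur_complement X j \<in> carrier_mat m m"
  by (simp add: schur_complement_def carrier_matD)

lemma index_schur_complement [simp]:
  "X \<in> carrier_mat m m \<Longrightarrow> a < m \<Longrightarrow> b < m \<Longrightarrow>
    schur_complement X j $$ (a, b) = X $$ (a, b) - X $$ (a, j) * cnj (X $$ (b, j)) / X $$ (j, j)"
  by (simp add: schur_complement_def carrier_matD)

lemma quad_form_schur_complement:
  assumes X: "psd_mat m X" and j: "j < m" and v: "v \<in> carrier_vec m"
  defines "u \<equiv> v + (- (conjugate (col X j) \<bullet> v) / X $$ (j, j)) \<cdot>\<^sub>v unit_vec m j"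
  shows "conjugate v \<bullet> (schur_complement X j *\<^sub>v v) = conjugate u \<bullet> (X *\<^sub>v u)"
proof -
  note X' = psd_matD[OF X]
  define \<beta> where "\<beta> = conjugate (col X j) \<bullet> v"
  define d where "d = X $$ (j, j)"
  have d_real: "cnj d = d" unfolding d_def using psd_mat_diag_real[OF X j] .
  have col: "X *\<^sub>v unit_vec m j = col X j" using X'(1) j by (intro eq_vecI) simp_all
  have x: "col X j \<in> carrier_vec m" using X'(1) j by simp
  have "cnj \<beta> = col X j \<bullet> conjugate v"
    unfolding \<beta>_def using conjugate_sprod_vec[of "conjugate (col X j)" m v] x v by simp
  also have "\<dots> = conjugate v \<bullet> (X *\<^sub>v unit_vec m j)"
    unfolding col using comm_scalar_prod[of "col X j" m "conjugate v"] x v by simp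
  finally have e1: "conjugate v \<bullet> (X *\<^sub>v unit_vec m j) = cnj \<beta>" ..
  have e2: "conjugate (unit_vec m j) \<bullet> (X *\<^sub>v v) = \<beta>"
    using scalar_prod_mat_adjoint[OF X'(1) unit_vec_carrier v] X'(2) by (simp add: \<beta>_def col)
  have e3: "conjugate (unit_vec m j) \<bullet> (X *\<^sub>v unit_vec m j) = d"
    using unit_vec_scalar_prod_mult_unit_vec[OF X'(1) j j] by (simp add: d_def)
  have "conjugate v \<bullet> (schur_complement X j *\<^sub>v v) = conjugate v \<bullet> (X *\<^sub>v v) - cnj \<beta> * \<beta> / d"
    using v j carrier_matD[OF X'(1)]
    by (simp add: schur_complement_def \<beta>_def d_def scalar_prod_def atLeast0LessThan sum_subtractf sum_divide_distrib
        sum_distrib_left sum_distrib_right algebra_simps)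
  also have "\<dots> = conjugate u \<bullet> (X *\<^sub>v u)"
    unfolding u_def \<beta>_def[symmetric] quad_form_add_smult[OF X'(1) v unit_vec_carrier] e1 e2 e3 d_def[symmetric]
    using d_real by (cases "d = 0") (simp_all add: field_simps)
  finally show ?thesis .
qed


lemma psd_mat_schur_complement:
  assumes X: "psd_mat m X" and j: "j < m"
  shows "psd_mat m (schur_complement X j)"
  unfolding psd_mat_iff
proof (intro conjI ballI)
  note X' = psd_matD[OF X]
  show "schur_complement X j \<in> carrier_mat m m" using X'(1) by simp
  show "mat_adjoint (schur_complement X j) = schur_complement X j"
  proof (rule eq_matI)
    fix a b assume "a < dim_row (schur_complement X j)" "b < dim_col (schur_complement X j)"
    then have ab: "a < m" "b < m" using X'(1) by auto
    then show "mat_adjoint (schur_complement X j) $$ (a, b) = schur_complement X j $$ (a, b)"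
      using X'(1) hermitian_entry[OF X'(1,2) ab] psd_mat_diag_real[OF X j] j
      by (simp add: schur_complement_def mult.commute)
  qed (use X'(1) in simp_all)
  fix v :: "complex vec" assume v: "v \<in> carrier_vec m"
  show "0 \<le> conjugate v \<bullet> (schur_complement X j *\<^sub>v v)"
    unfolding quad_form_schur_complement[OF X j v] using X'(3) v by simp
qed

lemma schur_complement_diag:
  assumes X: "psd_mat m X" and j: "j < m" and s: "X $$ (j, j) \<noteq> 0"
  shows "schur_complement X j $$ (j, j) = 0"
    and "\<And>i. i < m \<Longrightarrow> X $$ (i, i) = 0 \<Longrightarrow> schur_complement X j $$ (i, i) = 0"
proof -
  show "schur_complement X j $$ (j, j) = 0"
    using psd_matD(1)[OF X] j s psd_mat_diag_real[OF X j] by simp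
  fix i assume i: "i < m" and "X $$ (i, i) = 0"
  then have "X $$ (j, i) = 0" using psd_mat_col_eq_0_of_diag_eq_0[OF X] j by blast
  then show "schur_complement X j $$ (i, i) = 0"
    using psd_matD(1)[OF X] hermitian_entry[OF psd_matD(1,2)[OF X] j i] \<open>X $$ (i, i) = 0\<close> i j by simp
qed

text \<open>Each step splits off the rank-one term x x^* / X_jj (x the j-th column of X) and kills
  one more diagonal entry.\<close>

lemma psd_mat_gram_decomposition_bounded:
  assumes "psd_mat m X" and "card {i. i < m \<and> X $$ (i, i) \<noteq> 0} \<le> N"
  shows "\<exists>W \<in> carrier_mat m N. X = W * mat_adjoint W"
  using assms
proof (induction N arbitrary: X)
  case 0
  then have "X = 0\<^sub>m m m" by (intro psd_mat_eq_0_of_diag_eq_0) auto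
  then show ?case by (intro bexI[of _ "0\<^sub>m m 0"]) (auto intro!: eq_matI)
next
  case (Suc N)
  note X = Suc.prems(1)
  show ?case
  proof (cases "\<exists>j<m. X $$ (j, j) \<noteq> 0")
    case False
    then have "X = 0\<^sub>m m m" using X by (intro psd_mat_eq_0_of_diag_eq_0) auto
    then show ?thesis by (intro bexI[of _ "0\<^sub>m m (Suc N)"]) (auto intro!: eq_matI simp: scalar_prod_def)
  next
    case True
    then obtain j where j: "j < m" and s: "X $$ (j, j) \<noteq> 0" by blast
    let ?S = "\<lambda>Y. {i. i < m \<and> Y $$ (i, i) \<noteq> 0}"
    have "?S (schur_complement X j) \<subseteq> ?S X - {j}"
      using schur_complement_diag[OF X j s] by blast
    then have "card (?S (schur_complement X j)) \<le> card (?S X) - 1"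
      using card_mono[of "?S X - {j}"] card_Diff_singleton[of j "?S X"] j s by fastforce
    then have "card (?S (schur_complement X j)) \<le> N"
      using Suc.prems(2) by linarith
    then obtain W' where W': "W' \<in> carrier_mat m N" and W'_eq: "schur_complement X j = W' * mat_adjoint W'"
      using Suc.IH[OF psd_mat_schur_complement[OF X j]] by blast
    obtain r where r: "0 < r" "X $$ (j, j) = of_real r"
      using psd_mat_diag_nonneg[OF X j] s
      by (intro that[of "Re (X $$ (j, j))"]) (auto simp: less_eq_complex_def complex_eq_iff)
    have sqrt_r: "of_real (sqrt r) * of_real (sqrt r) = X $$ (j, j)" "of_real (sqrt r) \<noteq> (0 :: complex)"
      using r by (simp_all flip: of_real_mult)
    define W where "W = mat m (Suc N) (\<lambda>(i, k). if k < N then W' $$ (i, k) else X $$ (i, j) / of_real (sqrt r))"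
    have "X = W * mat_adjoint W"
    proof (rule eq_matI)
      fix a b assume "a < dim_row (W * mat_adjoint W)" "b < dim_col (W * mat_adjoint W)"
      then have a: "a < m" and b: "b < m" by (simp_all add: W_def)
      have "(W * mat_adjoint W) $$ (a, b) =
          (\<Sum>k<N. W' $$ (a, k) * cnj (W' $$ (b, k))) + X $$ (a, j) / of_real (sqrt r) * cnj (X $$ (b, j) / of_real (sqrt r))"
        using a b by (simp add: W_def scalar_prod_def atLeast0LessThan)
      also have "(\<Sum>k<N. W' $$ (a, k) * cnj (W' $$ (b, k))) = schur_complement X j $$ (a, b)"
        using a b W' by (simp add: W'_eq scalar_prod_def atLeast0LessThan)
      also have "schur_complement X j $$ (a, b) + X $$ (a, j) / of_real (sqrt r) * cnj (X $$ (b, j) / of_real (sqrt r))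
          = X $$ (a, b)"
        using a b sqrt_r psd_matD(1)[OF X] by (simp add: sqrt_r(1)[symmetric] field_simps)
      finally show "X $$ (a, b) = (W * mat_adjoint W) $$ (a, b)" ..
    qed (use X in \<open>auto simp: W_def psd_mat_iff\<close>)
    moreover have "W \<in> carrier_mat m (Suc N)" by (simp add: W_def)
    ultimately show ?thesis by blast
  qed
qed

lemma psd_mat_gram_decomposition:
  assumes "psd_mat m X"
  shows "\<exists>W \<in> carrier_mat m m. X = W * mat_adjoint W"
proof (rule psd_mat_gram_decomposition_bounded[OF assms])
  have "{i. i < m \<and> X $$ (i, i) \<noteq> 0} \<subseteq> {..<m}" by auto
  then show "card {i. i < m \<and> X $$ (i, i) \<noteq> 0} \<le> m" using card_mono[of "{..<m}"] by fastforce
qed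

lemma psd_mat_eq_0_of_trace_mult_eq_0:
  assumes X: "psd_mat m X" and M: "psd_mat m M" and tr: "mat_trace (X * M) = 0"
    and ker: "mat_kernel X \<subseteq> mat_kernel M"
  shows "M = 0\<^sub>m m m"
proof -
  obtain W where W: "W \<in> carrier_mat m m" and M_eq: "M = W * mat_adjoint W"
    using psd_mat_gram_decomposition[OF M] by blast
  note Xc = psd_matD(1)[OF X] and Mc = psd_matD(1)[OF M]
  have "mat_trace (X * M) = mat_trace ((X * W) * mat_adjoint W)"
    unfolding M_eq using Xc W by (simp add: assoc_mult_mat[of X m m W m "mat_adjoint W" m])
  also have "\<dots> = mat_trace (mat_adjoint W * (X * W))"
    using Xc W by (intro mat_trace_mult_comm) auto
  also have "\<dots> = mat_trace (mat_adjoint W * X * W)"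
    using Xc W by (simp add: assoc_mult_mat[of "mat_adjoint W" m m X m W m])
  also have "\<dots> = (\<Sum>k<m. conjugate (col W k) \<bullet> (X *\<^sub>v col W k))"
    using mat_trace_adjoint_mult_mult[OF W Xc] .
  finally have "(\<Sum>k<m. conjugate (col W k) \<bullet> (X *\<^sub>v col W k)) = 0" using tr by simp
  moreover have "0 \<le> conjugate (col W k) \<bullet> (X *\<^sub>v col W k)" for k
    using psd_matD(3)[OF X] col_dim[of W k] W by simp
  ultimately have "conjugate (col W k) \<bullet> (X *\<^sub>v col W k) = 0" if "k < m" for k
    using that by (simp add: sum_nonneg_eq_0_iff)
  then have "col W k \<in> mat_kernel X" if "k < m" for k
    using that psd_mat_kernel_of_quad_form_eq_0[OF X] W by (simp add: mat_kernel[OF Xc])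
  then have "X * W = 0\<^sub>m m m"
    using mult_eq_0_iff_cols_in_kernel[OF Xc W] by blast
  then have MW: "M * W = 0\<^sub>m m m" by (rule mult_eq_0_of_kernel_subset[OF ker Xc Mc W])
  have "mat_adjoint M * M = M * (W * mat_adjoint W)"
    using psd_matD(2)[OF M] M_eq by simp
  also have "\<dots> = (M * W) * mat_adjoint W"
    using Mc W by (simp add: assoc_mult_mat[of M m m W m "mat_adjoint W" m])
  finally have "mat_trace (mat_adjoint M * M) = 0"
    using MW W by simp
  then show ?thesis using mat_trace_adjoint_mult_self_eq_0[OF Mc] by blast
qed

section \<open>Positive maps\<close>

lemma lin_mapD:
  assumes "lin_map n m f"
  shows "A \<in> carrier_mat n n \<Longrightarrow> f A \<in> carrier_mat m m"
    and "A \<in> carrier_mat n n \<Longrightarrow> B \<in> carrier_mat n n \<Longrightarrow> f (A + B) = f A + f B"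
    and "A \<in> carrier_mat n n \<Longrightarrow> f (c \<cdot>\<^sub>m A) = c \<cdot>\<^sub>m f A"
  using assms unfolding lin_map_def by blast+

lemma positive_mapD: "positive_map n m f \<Longrightarrow> psd_mat n A \<Longrightarrow> psd_mat m (f A)"
  unfolding positive_map_def by blast

lemma gram_shift_expansion:
  assumes W: "W \<in> carrier_mat n n"
  shows "mat_adjoint (W + c \<cdot>\<^sub>m 1\<^sub>m n) * (W + c \<cdot>\<^sub>m 1\<^sub>m n) =
    mat_adjoint W * W + c \<cdot>\<^sub>m mat_adjoint W + cnj c \<cdot>\<^sub>m W + (cnj c * c) \<cdot>\<^sub>m 1\<^sub>m n"
proof -
  have "mat_adjoint (W + c \<cdot>\<^sub>m 1\<^sub>m n) = mat_adjoint W + cnj c \<cdot>\<^sub>m 1\<^sub>m n"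
    using W by (simp add: mat_adjoint_add[of _ n n] mat_adjoint_smult)
  then show ?thesis
    using W by (simp add: add_mult_distrib_mat[of _ n n _ _ n] mult_add_distrib_mat[of _ n n _ n]
        mult_smult_distrib[of _ n n _ n] mult_smult_assoc_mat[of _ n n _ n])
      (intro eq_matI; simp add: algebra_simps)
qed

context
  fixes n m :: nat and \<phi> :: "complex mat \<Rightarrow> complex mat"
  assumes lin: "lin_map n m \<phi>" and pos: "positive_map n m \<phi>"
begin

lemma positive_map_gram_shift:
  assumes W: "W \<in> carrier_mat n n"
  shows "\<phi> (mat_adjoint (W + c \<cdot>\<^sub>m 1\<^sub>m n) * (W + c \<cdot>\<^sub>m 1\<^sub>m n)) =
    \<phi> (mat_adjoint W * W) + c \<cdot>\<^sub>m \<phi> (mat_adjoint W) + cnj c \<cdot>\<^sub>m \<phi> W + (cnj c * c) \<cdot>\<^sub>m \<phi> (1\<^sub>m n)"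
proof -
  have carriers: "mat_adjoint W * W \<in> carrier_mat n n" "mat_adjoint W \<in> carrier_mat n n"
    "mat_adjoint W * W + c \<cdot>\<^sub>m mat_adjoint W \<in> carrier_mat n n"
    "mat_adjoint W * W + c \<cdot>\<^sub>m mat_adjoint W + cnj c \<cdot>\<^sub>m W \<in> carrier_mat n n"
    using W by (auto intro!: mult_carrier_mat add_carrier_mat)
  show ?thesis
    unfolding gram_shift_expansion[OF W]
    using W carriers lin_mapD(2)[OF lin carriers(1) smult_carrier_mat[OF carriers(2)]]
    by (simp add: lin_mapD[OF lin])
qed

lemma positive_map_psd_gram_shift:
  "W \<in> carrier_mat n n \<Longrightarrow> psd_mat m (\<phi> (mat_adjoint (W + c \<cdot>\<^sub>m 1\<^sub>m n) * (W + c \<cdot>\<^sub>m 1\<^sub>m n)))"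
  by (intro positive_mapD[OF pos] psd_mat_gram[of _ n]) simp

text \<open>The Hermitian matrices \<phi> ((W + c 1)^* (W + c 1)) have entries affine in c and cnj c,
  and comparing coefficients relates \<phi> (W^*) to \<phi> W.\<close>

lemma positive_map_mat_adjoint:
  assumes W: "W \<in> carrier_mat n n"
  shows "\<phi> (mat_adjoint W) = mat_adjoint (\<phi> W)"
proof -
  let ?G = "\<phi> (mat_adjoint W * W)" and ?P = "\<phi> (mat_adjoint W)" and ?Q = "\<phi> W" and ?E = "\<phi> (1\<^sub>m n)"
  have G: "psd_mat m ?G" using positive_mapD[OF pos psd_mat_gram[OF W]] .
  have E: "psd_mat m ?E" using positive_mapD[OF pos psd_mat_one] .
  have P: "?P \<in> carrier_mat m m" and Q: "?Q \<in> carrier_mat m m"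
    using W lin_mapD(1)[OF lin] by simp_all
  show ?thesis
  proof (rule eq_matI)
    fix a b assume "a < dim_row (mat_adjoint ?Q)" "b < dim_col (mat_adjoint ?Q)"
    then have a: "a < m" and b: "b < m" using Q by simp_all
    have "c * (?P $$ (a, b) - cnj (?Q $$ (b, a))) + cnj c * (?Q $$ (a, b) - cnj (?P $$ (b, a))) = 0" for c
    proof -
      let ?H = "\<phi> (mat_adjoint (W + c \<cdot>\<^sub>m 1\<^sub>m n) * (W + c \<cdot>\<^sub>m 1\<^sub>m n))"
      have H: "?H \<in> carrier_mat m m" "mat_adjoint ?H = ?H"
        using psd_matD[OF positive_map_psd_gram_shift[OF W]] by blast+
      have H_idx: "?H $$ (i, j) = ?G $$ (i, j) + c * ?P $$ (i, j) + cnj c * ?Q $$ (i, j) + cnj c * c * ?E $$ (i, j)"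
        if "i < m" "j < m" for i j
        unfolding positive_map_gram_shift[OF W] using that P Q psd_matD(1)[OF G] psd_matD(1)[OF E] by simp
      show ?thesis
        using hermitian_entry[OF H b a] H_idx[OF a b] H_idx[OF b a]
          hermitian_entry[OF psd_matD(1,2)[OF G] b a] hermitian_entry[OF psd_matD(1,2)[OF E] b a]
        by (simp add: algebra_simps)
    qed
    then have "?P $$ (a, b) - cnj (?Q $$ (b, a)) = 0" by (rule sesquilinear_coeffs_eq_0(1))
    then show "?P $$ (a, b) = mat_adjoint ?Q $$ (a, b)" using a b Q by simp
  qed (use P Q in simp_all)
qed

lemma positive_map_quad_form_eq_0:
  assumes W: "W \<in> carrier_mat n n" and v: "v \<in> carrier_vec m"
    and zero: "conjugate v \<bullet> (\<phi> (mat_adjoint W * W) *\<^sub>v v) = 0 \<or> conjugate v \<bullet> (\<phi> (1\<^sub>m n) *\<^sub>v v) = 0"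
  shows "conjugate v \<bullet> (\<phi> W *\<^sub>v v) = 0"
proof -
  have carriers: "\<phi> (mat_adjoint W * W) \<in> carrier_mat m m" "\<phi> (mat_adjoint W) \<in> carrier_mat m m"
    "\<phi> W \<in> carrier_mat m m" "\<phi> (1\<^sub>m n) \<in> carrier_mat m m"
    using W by (auto intro!: lin_mapD(1)[OF lin] mult_carrier_mat)
  have "0 \<le> conjugate v \<bullet> (\<phi> (mat_adjoint W * W) *\<^sub>v v) + c * (conjugate v \<bullet> (\<phi> (mat_adjoint W) *\<^sub>v v))
      + cnj c * (conjugate v \<bullet> (\<phi> W *\<^sub>v v)) + cnj c * c * (conjugate v \<bullet> (\<phi> (1\<^sub>m n) *\<^sub>v v))" for c
    using psd_matD(3)[OF positive_map_psd_gram_shift[OF W] v]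
    unfolding positive_map_gram_shift[OF W] lincomb_quad_form[OF carriers v] .
  then show ?thesis
    using nonneg_sesquilinear_coeffs_eq_0(2) zero by blast
qed

lemma positive_map_eq_0_of_gram_eq_0:
  assumes W: "W \<in> carrier_mat n n" and zero: "\<phi> (mat_adjoint W * W) = 0\<^sub>m m m"
  shows "\<phi> W = 0\<^sub>m m m"
proof (rule mat_eq_0_of_quad_form_eq_0)
  show "\<phi> W \<in> carrier_mat m m" using lin_mapD(1)[OF lin W] .
  fix v :: "complex vec" assume v: "v \<in> carrier_vec m"
  have "\<phi> (mat_adjoint W * W) *\<^sub>v v = 0\<^sub>v m" unfolding zero using v by (intro eq_vecI) (auto simp: scalar_prod_def)
  then show "conjugate v \<bullet> (\<phi> W *\<^sub>v v) = 0" using v by (intro positive_map_quad_form_eq_0 W) simp_all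
qed

lemma positive_map_kernel_one_subset:
  assumes B: "B \<in> carrier_mat n n"
  shows "mat_kernel (\<phi> (1\<^sub>m n)) \<subseteq> mat_kernel (\<phi> B)"
proof
  fix v assume v_ker: "v \<in> mat_kernel (\<phi> (1\<^sub>m n))"
  have carriers: "\<phi> (mat_adjoint B * B) \<in> carrier_mat m m" "\<phi> (mat_adjoint B) \<in> carrier_mat m m"
    "\<phi> B \<in> carrier_mat m m" "\<phi> (1\<^sub>m n) \<in> carrier_mat m m"
    using B by (auto intro!: lin_mapD(1)[OF lin] mult_carrier_mat)
  have v: "v \<in> carrier_vec m" and Ev: "\<phi> (1\<^sub>m n) *\<^sub>v v = 0\<^sub>v m"
    using mat_kernelD[OF carriers(4) v_ker] by blast+
  have kernel_of_gram: "\<phi> (mat_adjoint W * W) *\<^sub>v v = 0\<^sub>v m" if W: "W \<in> carrier_mat n n" for W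
  proof (rule psd_mat_kernel_of_quad_form_eq_0[OF _ v])
    show "psd_mat m (\<phi> (mat_adjoint W * W))" using positive_mapD[OF pos psd_mat_gram[OF W]] .
    show "conjugate v \<bullet> (\<phi> (mat_adjoint W * W) *\<^sub>v v) = 0"
      using W Ev v by (intro positive_map_quad_form_eq_0 v) (auto intro: mult_carrier_mat)
  qed
  have sesq: "c * (\<phi> (mat_adjoint B) *\<^sub>v v) $ i + cnj c * (\<phi> B *\<^sub>v v) $ i = 0" if i: "i < m" for c i
  proof -
    have "\<phi> (mat_adjoint (B + c \<cdot>\<^sub>m 1\<^sub>m n) * (B + c \<cdot>\<^sub>m 1\<^sub>m n)) *\<^sub>v v = 0\<^sub>v m"
      using B by (intro kernel_of_gram) simp
    then have "0\<^sub>v m + c \<cdot>\<^sub>v (\<phi> (mat_adjoint B) *\<^sub>v v) + cnj c \<cdot>\<^sub>v (\<phi> B *\<^sub>v v) + (cnj c * c) \<cdot>\<^sub>v 0\<^sub>v m = 0\<^sub>v m"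
      unfolding positive_map_gram_shift[OF B] lincomb_mult_mat_vec[OF carriers v] kernel_of_gram[OF B] Ev .
    then show ?thesis
      using i carriers v by (auto dest!: arg_cong[where f = "\<lambda>w. w $ i"])
  qed
  have "\<phi> B *\<^sub>v v = 0\<^sub>v m"
    using sesquilinear_coeffs_eq_0(2)[OF sesq] carriers(3) by (intro eq_vecI) auto
  then show "v \<in> mat_kernel (\<phi> B)" using mat_kernelI[OF carriers(3) v] by blast
qed

end

section \<open>The Hilbert--Schmidt adjoint\<close>

lemma is_hs_adjointD:
  assumes "is_hs_adjoint n m \<phi> \<psi>" "A \<in> carrier_mat m m"
  shows "\<psi> A \<in> carrier_mat n n"
    and "B \<in> carrier_mat n n \<Longrightarrow> mat_trace (mat_adjoint A * \<phi> B) = mat_trace (mat_adjoint (\<psi> A) * B)"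
  using assms unfolding is_hs_adjoint_def by blast+

lemma hs_adjoint_eq_0_iff:
  assumes adj: "is_hs_adjoint n m \<phi> \<psi>" and A: "A \<in> carrier_mat m m"
  shows "\<psi> A = 0\<^sub>m n n \<longleftrightarrow> (\<forall>B \<in> carrier_mat n n. mat_trace (mat_adjoint A * \<phi> B) = 0)"
proof
  assume "\<psi> A = 0\<^sub>m n n"
  then show "\<forall>B \<in> carrier_mat n n. mat_trace (mat_adjoint A * \<phi> B) = 0"
    using is_hs_adjointD(2)[OF adj A] by simp
next
  assume "\<forall>B \<in> carrier_mat n n. mat_trace (mat_adjoint A * \<phi> B) = 0"
  then have "mat_trace (mat_adjoint (\<psi> A) * \<psi> A) = 0"
    using is_hs_adjointD[OF adj A] by simp
  then show "\<psi> A = 0\<^sub>m n n"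
    using mat_trace_adjoint_mult_self_eq_0 is_hs_adjointD(1)[OF adj A] by blast
qed

context
  fixes n m :: nat and \<phi> \<psi> :: "complex mat \<Rightarrow> complex mat" and X :: "complex mat"
  assumes lin: "lin_map n m \<phi>" and pos: "positive_map n m \<phi>" and adj: "is_hs_adjoint n m \<phi> \<psi>"
    and X: "psd_mat m X"
begin

private lemma carriers:
  "X \<in> carrier_mat m m" "mat_adjoint X = X" "\<And>B. B \<in> carrier_mat n n \<Longrightarrow> \<phi> B \<in> carrier_mat m m"
  "\<And>A. A \<in> carrier_mat m m \<Longrightarrow> \<psi> A \<in> carrier_mat n n"
  using psd_matD[OF X] lin_mapD(1)[OF lin] is_hs_adjointD(1)[OF adj] by blast+

lemma hs_adjoint_eq_0_of_mult_right_eq_0: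
  assumes ker: "mat_kernel X \<subseteq> mat_kernel (\<phi> (1\<^sub>m n))" and A: "A \<in> carrier_mat m m" and AX: "A * X = 0\<^sub>m m m"
  shows "\<psi> A = 0\<^sub>m n n"
  unfolding hs_adjoint_eq_0_iff[OF adj A]
proof
  fix B :: "complex mat" assume B: "B \<in> carrier_mat n n"
  have "X * mat_adjoint A = mat_adjoint (A * X)"
    using mat_adjoint_mult[OF A carriers(1)] carriers(2) by simp
  then have XA: "X * mat_adjoint A = 0\<^sub>m m m" using AX by simp
  have "mat_kernel X \<subseteq> mat_kernel (\<phi> B)"
    using ker positive_map_kernel_one_subset[OF lin pos B] by blast
  then have "\<phi> B * mat_adjoint A = 0\<^sub>m m m"
    using mult_eq_0_of_kernel_subset[OF _ carriers(1) carriers(3)[OF B] carrier_mat_adjoint[OF A] XA] by blast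
  moreover have "mat_trace (mat_adjoint A * \<phi> B) = mat_trace (\<phi> B * mat_adjoint A)"
    using mat_trace_mult_comm[OF carrier_mat_adjoint[OF A] carriers(3)[OF B]] .
  ultimately show "mat_trace (mat_adjoint A * \<phi> B) = 0" by simp
qed

lemma hs_adjoint_eq_0_of_mult_left_eq_0:
  assumes ker: "mat_kernel X \<subseteq> mat_kernel (\<phi> (1\<^sub>m n))" and A: "A \<in> carrier_mat m m" and XA: "X * A = 0\<^sub>m m m"
  shows "\<psi> A = 0\<^sub>m n n"
  unfolding hs_adjoint_eq_0_iff[OF adj A]
proof
  fix B :: "complex mat" assume B: "B \<in> carrier_mat n n"
  have B': "mat_adjoint B \<in> carrier_mat n n" using B by simp
  have "mat_kernel X \<subseteq> mat_kernel (\<phi> (mat_adjoint B))"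
    using ker positive_map_kernel_one_subset[OF lin pos B'] by blast
  then have "\<phi> (mat_adjoint B) * A = 0\<^sub>m m m"
    using mult_eq_0_of_kernel_subset[OF _ carriers(1) carriers(3)[OF B'] A XA] by blast
  then have "mat_adjoint (\<phi> B) * A = 0\<^sub>m m m"
    using positive_map_mat_adjoint[OF lin pos B] by simp
  moreover have "mat_adjoint (mat_adjoint A * \<phi> B) = mat_adjoint (\<phi> B) * A"
    using mat_adjoint_mult[OF carrier_mat_adjoint[OF A] carriers(3)[OF B]] by simp
  ultimately have "mat_adjoint (mat_adjoint A * \<phi> B) = 0\<^sub>m m m" by simp
  then show "mat_trace (mat_adjoint A * \<phi> B) = 0"
    using mat_trace_adjoint[OF mult_carrier_mat[OF carrier_mat_adjoint[OF A] carriers(3)[OF B]]] by simp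
qed

lemma kernel_subset_of_hs_adjoint_eq_0:
  assumes vanish: "\<And>A. A \<in> carrier_mat m m \<Longrightarrow> A * X = 0\<^sub>m m m \<Longrightarrow> X * A = 0\<^sub>m m m \<Longrightarrow> \<psi> A = 0\<^sub>m n n"
  shows "mat_kernel X \<subseteq> mat_kernel (\<phi> (1\<^sub>m n))"
proof
  fix v assume v_ker: "v \<in> mat_kernel X"
  have v: "v \<in> carrier_vec m" using mat_kernelD(1)[OF carriers(1) v_ker] .
  define V where "V = mat_of_cols m [v]"
  have V: "V \<in> carrier_mat m 1" unfolding V_def using mat_of_cols_carrier(1)[of m "[v]"] by simp
  have XV: "X * V = 0\<^sub>m m 1"
    using mult_eq_0_iff_cols_in_kernel[OF carriers(1) V] v v_ker by (simp add: V_def)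
  have A: "V * mat_adjoint V \<in> carrier_mat m m" using V by simp
  have "V * mat_adjoint V * X = V * mat_adjoint (X * V)"
    using assoc_mult_mat[OF V carrier_mat_adjoint[OF V] carriers(1)] mat_adjoint_mult[OF carriers(1) V] carriers(2)
    by simp
  then have "V * mat_adjoint V * X = 0\<^sub>m m m" using V XV by simp
  moreover have "X * (V * mat_adjoint V) = 0\<^sub>m m m"
    using V carriers XV by (simp flip: assoc_mult_mat[of X m m V 1 "mat_adjoint V" m])
  ultimately have "\<psi> (V * mat_adjoint V) = 0\<^sub>m n n" using vanish[OF A] by blast
  then have "mat_trace (mat_adjoint (V * mat_adjoint V) * \<phi> (1\<^sub>m n)) = 0"
    using hs_adjoint_eq_0_iff[OF adj A] by simp
  moreover have "mat_trace (mat_adjoint (V * mat_adjoint V) * \<phi> (1\<^sub>m n)) = conjugate v \<bullet> (\<phi> (1\<^sub>m n) *\<^sub>v v)"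
    unfolding V_def using mat_trace_rank_one_mult[OF v carriers(3)[OF one_carrier_mat]] .
  ultimately have "\<phi> (1\<^sub>m n) *\<^sub>v v = 0\<^sub>v m"
    using psd_mat_kernel_of_quad_form_eq_0[OF positive_mapD[OF pos psd_mat_one] v] by simp
  then show "v \<in> mat_kernel (\<phi> (1\<^sub>m n))" using mat_kernelI[OF carriers(3) v] by simp
qed

lemma positive_map_eq_0_of_trace_gram_eq_0:
  assumes ker: "mat_kernel X \<subseteq> mat_kernel (\<phi> (1\<^sub>m n))" and W: "W \<in> carrier_mat n n"
    and tr: "mat_trace (mat_adjoint (\<psi> X) * (mat_adjoint W * W)) = 0"
  shows "\<phi> W = 0\<^sub>m m m"
proof (rule positive_map_eq_0_of_gram_eq_0[OF lin pos W])
  have G: "mat_adjoint W * W \<in> carrier_mat n n" using mult_carrier_mat[OF carrier_mat_adjoint[OF W] W] .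
  show "\<phi> (mat_adjoint W * W) = 0\<^sub>m m m"
  proof (rule psd_mat_eq_0_of_trace_mult_eq_0[OF X])
    show "psd_mat m (\<phi> (mat_adjoint W * W))" using positive_mapD[OF pos psd_mat_gram[OF W]] .
    show "mat_trace (X * \<phi> (mat_adjoint W * W)) = 0"
      using is_hs_adjointD(2)[OF adj carriers(1) G] carriers(2) tr by simp
    show "mat_kernel X \<subseteq> mat_kernel (\<phi> (mat_adjoint W * W))"
      using ker positive_map_kernel_one_subset[OF lin pos G] by blast
  qed
qed

lemma positive_map_eq_0_of_mult_right_hs_adjoint_eq_0:
  assumes ker: "mat_kernel X \<subseteq> mat_kernel (\<phi> (1\<^sub>m n))" and A: "A \<in> carrier_mat n n"
    and AY: "A * \<psi> X = 0\<^sub>m n n"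
  shows "\<phi> A = 0\<^sub>m m m"
proof (rule positive_map_eq_0_of_trace_gram_eq_0[OF ker A])
  have Y: "\<psi> X \<in> carrier_mat n n" using carriers(4)[OF carriers(1)] .
  have "mat_adjoint (\<psi> X) * (mat_adjoint A * A) = mat_adjoint (A * \<psi> X) * A"
    using mat_adjoint_mult[OF A Y] assoc_mult_mat[OF carrier_mat_adjoint[OF Y] carrier_mat_adjoint[OF A] A] by simp
  then show "mat_trace (mat_adjoint (\<psi> X) * (mat_adjoint A * A)) = 0" using AY A by simp
qed

lemma positive_map_eq_0_of_mult_left_hs_adjoint_eq_0:
  assumes ker: "mat_kernel X \<subseteq> mat_kernel (\<phi> (1\<^sub>m n))" and A: "A \<in> carrier_mat n n"
    and YA: "\<psi> X * A = 0\<^sub>m n n"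
  shows "\<phi> A = 0\<^sub>m m m"
proof -
  have Y: "\<psi> X \<in> carrier_mat n n" using carriers(4)[OF carriers(1)] .
  have "\<phi> (mat_adjoint A) = 0\<^sub>m m m"
  proof (rule positive_map_eq_0_of_trace_gram_eq_0[OF ker carrier_mat_adjoint[OF A]])
    have "mat_trace (mat_adjoint (\<psi> X) * (mat_adjoint (mat_adjoint A) * mat_adjoint A))
        = mat_trace ((mat_adjoint (\<psi> X) * A) * mat_adjoint A)"
      using assoc_mult_mat[OF carrier_mat_adjoint[OF Y] A carrier_mat_adjoint[OF A]] by simp
    also have "\<dots> = mat_trace (mat_adjoint A * (mat_adjoint (\<psi> X) * A))"
      using mat_trace_mult_comm[OF mult_carrier_mat[OF carrier_mat_adjoint[OF Y] A] carrier_mat_adjoint[OF A]] .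
    also have "\<dots> = mat_trace (mat_adjoint (\<psi> X * A) * A)"
      using mat_adjoint_mult[OF Y A] assoc_mult_mat[OF carrier_mat_adjoint[OF A] carrier_mat_adjoint[OF Y] A] by simp
    also have "\<dots> = 0" using YA A by simp
    finally show "mat_trace (mat_adjoint (\<psi> X) * (mat_adjoint (mat_adjoint A) * mat_adjoint A)) = 0" .
  qed
  then have "mat_adjoint (\<phi> A) = 0\<^sub>m m m" using positive_map_mat_adjoint[OF lin pos A] by simp
  then show ?thesis by (metis mat_adjoint_adjoint mat_adjoint_zero)
qed

end

theorem lemma4p3:
  fixes n m :: nat and phi phi_adj :: "complex mat \<Rightarrow> complex mat" and X :: "complex mat"
  assumes "lin_map n m phi"
    and "positive_map n m phi"
    and "is_hs_adjoint n m phi phi_adj"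
    and "psd_mat m X"
  shows "(map_ker m m (R_op X) \<subseteq> map_ker m n phi_adj
            \<longleftrightarrow> mat_kernel X \<subseteq> mat_kernel (phi (1\<^sub>m n)))
       \<and> (map_ker m m (R_op X) \<subseteq> map_ker m n phi_adj
            \<longrightarrow> map_ker n n (R_op (phi_adj X)) \<subseteq> map_ker n m phi)
       \<and> (map_ker m m (L_op X) \<subseteq> map_ker m n phi_adj
            \<longleftrightarrow> mat_kernel X \<subseteq> mat_kernel (phi (1\<^sub>m n)))
       \<and> (map_ker m m (L_op X) \<subseteq> map_ker m n phi_adj
            \<longrightarrow> map_ker n n (L_op (phi_adj X)) \<subseteq> map_ker n m phi)"
proof -
  have R: "map_ker m m (R_op X) \<subseteq> map_ker m n phi_adj \<longleftrightarrow> mat_kernel X \<subseteq> mat_kernel (phi (1\<^sub>m n))"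
    using kernel_subset_of_hs_adjoint_eq_0[OF assms] hs_adjoint_eq_0_of_mult_right_eq_0[OF assms]
    by (auto simp: map_ker_def R_op_def)
  have L: "map_ker m m (L_op X) \<subseteq> map_ker m n phi_adj \<longleftrightarrow> mat_kernel X \<subseteq> mat_kernel (phi (1\<^sub>m n))"
    using kernel_subset_of_hs_adjoint_eq_0[OF assms] hs_adjoint_eq_0_of_mult_left_eq_0[OF assms]
    by (auto simp: map_ker_def L_op_def)
  have "mat_kernel X \<subseteq> mat_kernel (phi (1\<^sub>m n)) \<Longrightarrow> map_ker n n (R_op (phi_adj X)) \<subseteq> map_ker n m phi"
    using positive_map_eq_0_of_mult_right_hs_adjoint_eq_0[OF assms] by (auto simp: map_ker_def R_op_def)
  moreover have "mat_kernel X \<subseteq> mat_kernel (phi (1\<^sub>m n)) \<Longrightarrow> map_ker n n (L_op (phi_adj X)) \<subseteq> map_ker n m phi"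
    using positive_map_eq_0_of_mult_left_hs_adjoint_eq_0[OF assms] by (auto simp: map_ker_def L_op_def)
  ultimately show ?thesis using R L by blast
qed

end
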